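(* For every integer $n\geq 3$, the shortest binary word that has $n$ distinct factorizations in two Lyndon words is the word $00(10)^{n-2}11$, which has length $2n$.
   Context: Words are over the alphabet $\{0,1\}$ with the lexicographic order induced by $0<1$. A Lyndon word is a nonempty primitive word that is lexicographically strictly smaller than all of its other rotations (conjugates) (equivalently, strictly smaller than all its nonempty proper suffixes). A factorization of a word $u$ in two Lyndon words is a pair $(x,y)$ of Lyndon words (both nonempty) with $u=xy$; two such factorizations are distinct if the pairs differ. "The shortest" means that this word has $n$ distinct such factorizations, and every other binary word with (at least) $n$ distinct such factorizations is strictly longer. *)

theory Defs
  imports Main
begin

definition binword :: "nat list \<Rightarrow> bool" where
  "binword w \<longleftrightarrow> set w \<subseteq> {0, 1}"

text \<open>Strict lexicographic order (a proper prefix is smaller).\<close>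
definition lex_less :: "nat list \<Rightarrow> nat list \<Rightarrow> bool" where
  "lex_less u v \<longleftrightarrow> (u, v) \<in> lexord {(a, b). a < b}"

text \<open>Lyndon word: nonempty and strictly smaller than all its other rotations
  (this forces primitivity, since a non-primitive word equals a nontrivial rotation).\<close>
definition lyndon :: "nat list \<Rightarrow> bool" where
  "lyndon w \<longleftrightarrow> w \<noteq> [] \<and> (\<forall>i. 0 < i \<and> i < length w \<longrightarrow> lex_less w (rotate i w))"

definition lyndon_facts :: "nat list \<Rightarrow> (nat list \<times> nat list) set" where
  "lyndon_facts u = {(x, y). lyndon x \<and> lyndon y \<and> x @ y = u}"

definition num_lyndon_facts :: "nat list \<Rightarrow> nat" where
  "num_lyndon_facts u = card (lyndon_facts u)"

end

theory Submission
  imports Defs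
begin

(*
  Cut positions i, where take i u and drop i u are both Lyndon, correspond to the
  factorizations of u. A binary Lyndon word of length at least 2 begins with 0 and
  ends with 1, so two neighbouring positions i and i + 1 cannot both be cuts: u ! i
  would be the first letter of a Lyndon suffix and the last letter of a Lyndon prefix.
  Hence a binary word with n factorizations has length at least 2n, and in case of
  equality its cuts are exactly the odd positions, which forces every letter: the
  word is 0 (01)^(n-1) 1 = 00 (10)^(n-2) 11. Conversely, every odd cut splits this
  word into the Lyndon words 0 (01)^k and (01)^(n-1-k) 1.
*)

lemma lex_less_iff_lexordp: "lex_less u v \<longleftrightarrow> ord_class.lexordp u v"
  by (simp add: lex_less_def lexordp_conv_lexord)

lemma lexordp_eq_Cons_snoc:
  fixes a :: "'a :: linorder"
  assumes "\<forall>b\<in>set xs. a \<le> b"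
  shows "ord_class.lexordp_eq (a # xs) (xs @ [a])"
  using assms by (induction xs) (auto simp: lexordp_eq_refl)

lemma lexordp_eq_snoc_Cons:
  fixes a :: "'a :: linorder"
  assumes "\<forall>b\<in>set xs. b \<le> a"
  shows "ord_class.lexordp_eq (xs @ [a]) (a # xs)"
  using assms by (induction xs) (auto simp: lexordp_eq_refl)

lemma lyndon_less_rotate:
  "lyndon w \<Longrightarrow> 0 < i \<Longrightarrow> i < length w \<Longrightarrow> lex_less w (rotate i w)"
  by (simp add: lyndon_def)

lemma lyndon_hd_not_max:
  assumes "lyndon w" "2 \<le> length w"
  shows "\<exists>b\<in>set w. hd w < b"
proof (rule ccontr)
  obtain a xs where w: "w = a # xs" using assms(2) by (cases w) auto
  assume "\<not> ?thesis"
  then have "ord_class.lexordp_eq (xs @ [a]) w"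
    unfolding w by (intro lexordp_eq_snoc_Cons) (auto simp: not_less)
  moreover have "lex_less w (rotate 1 w)"
    using assms by (intro lyndon_less_rotate) auto
  ultimately show False
    by (simp add: w lex_less_iff_lexordp lexordp_conv_lexordp_eq)
qed

lemma lyndon_last_not_min:
  assumes "lyndon w" "2 \<le> length w"
  shows "\<exists>b\<in>set w. b < last w"
proof (rule ccontr)
  obtain xs a where w: "w = xs @ [a]" using assms(2) by (cases w rule: rev_cases) auto
  assume "\<not> ?thesis"
  then have "ord_class.lexordp_eq (a # xs) w"
    unfolding w by (intro lexordp_eq_Cons_snoc) (auto simp: not_less)
  moreover have "lex_less w (rotate (length xs) w)"
    using assms by (intro lyndon_less_rotate) (auto simp: w)
  ultimately show False
    by (simp add: w rotate_append lex_less_iff_lexordp lexordp_conv_lexordp_eq)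
qed

lemma binword_lyndon_hd_last:
  assumes "binword w" "lyndon w" "2 \<le> length w"
  shows "hd w = 0" "last w = 1"
proof -
  have "hd w \<in> set w" "last w \<in> set w"
    using assms(3) by (auto intro!: hd_in_set last_in_set)
  then show "hd w = 0" "last w = 1"
    using lyndon_hd_not_max[OF assms(2,3)] lyndon_last_not_min[OF assms(2,3)] assms(1)
    unfolding binword_def by fastforce+
qed

lemma double_card_le_if_disjoint_Suc_image:
  fixes S :: "nat set"
  assumes "S \<subseteq> {1..<L}" "S \<inter> Suc ` S = {}"
  shows "2 * card S \<le> L"
proof -
  have "finite S" using assms(1) finite_subset by blast
  then have "card (S \<union> Suc ` S) = 2 * card S"
    using assms(2) by (simp add: card_Un_disjoint card_image)
  moreover have "S \<union> Suc ` S \<subseteq> {1..L}" using assms(1) by fastforce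
  ultimately show ?thesis by (metis card_atLeastAtMost card_mono diff_Suc_1 finite_atLeastAtMost)
qed

lemma eq_odd_below_if_double_card_eq:
  fixes S :: "nat set"
  assumes "S \<subseteq> {1..<L}" "S \<inter> Suc ` S = {}" "2 * card S = L"
  shows "S = {i. odd i \<and> i < L}"
proof -
  have "finite S" using assms(1) finite_subset by blast
  then have "card (S \<union> Suc ` S) = card {1..L}"
    using assms(2,3) by (simp add: card_Un_disjoint card_image)
  moreover have "S \<union> Suc ` S \<subseteq> {1..L}" using assms(1) by fastforce
  ultimately have cover: "S \<union> Suc ` S = {1..L}" by (simp add: card_subset_eq)
  have "i \<in> S \<longleftrightarrow> odd i" if "i < L" for i
    using that
  proof (induction i)
    case 0
    then show ?case using assms(1) by auto
  next
    case (Suc i)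
    have "Suc i \<in> S \<union> Suc ` S" using cover Suc.prems by simp
    then have "Suc i \<in> S \<longleftrightarrow> i \<notin> S" using assms(2) by blast
    then show ?case using Suc by simp
  qed
  then show ?thesis using assms(1) by auto
qed

definition lyndon_cuts :: "nat list \<Rightarrow> nat set" where
  "lyndon_cuts u = {i. lyndon (take i u) \<and> lyndon (drop i u)}"

lemma lyndon_cuts_subset: "lyndon_cuts u \<subseteq> {1..<length u}"
  by (auto simp: lyndon_cuts_def lyndon_def)

lemma num_lyndon_facts_eq_card_cuts: "num_lyndon_facts u = card (lyndon_cuts u)"
proof -
  have "bij_betw (\<lambda>i. (take i u, drop i u)) (lyndon_cuts u) (lyndon_facts u)"
  proof (rule bij_betw_byWitness[where f' = "\<lambda>(x, y). length x"])
    show "\<forall>i\<in>lyndon_cuts u. (\<lambda>(x, y). length x) (take i u, drop i u) = i"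
      using lyndon_cuts_subset by fastforce
  qed (auto simp: lyndon_cuts_def lyndon_facts_def)
  then show ?thesis
    unfolding num_lyndon_facts_def by (simp add: bij_betw_same_card)
qed

lemma binword_take: "binword u \<Longrightarrow> binword (take i u)"
  unfolding binword_def using set_take_subset by fast

lemma binword_drop: "binword u \<Longrightarrow> binword (drop i u)"
  unfolding binword_def using set_drop_subset by fast

lemma lyndon_cut_letters_before:
  assumes "binword u" "i \<in> lyndon_cuts u" "2 \<le> i"
  shows "u ! 0 = 0" "u ! (i - 1) = 1"
proof -
  have "i \<le> length u" using assms(2) lyndon_cuts_subset by fastforce
  then have len: "length (take i u) = i" by simp
  moreover have "lyndon (take i u)" using assms(2) by (simp add: lyndon_cuts_def)
  ultimately have "hd (take i u) = 0" "last (take i u) = 1"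
    using binword_lyndon_hd_last[OF binword_take[OF assms(1)]] assms(3) by auto
  moreover have "take i u \<noteq> []" using len assms(3) by auto
  ultimately have "take i u ! 0 = 0" "take i u ! (i - 1) = 1"
    by (metis hd_conv_nth last_conv_nth len)+
  then show "u ! 0 = 0" "u ! (i - 1) = 1"
    using assms(3) by simp_all
qed

lemma lyndon_cut_letters_after:
  assumes "binword u" "i \<in> lyndon_cuts u" "i + 2 \<le> length u"
  shows "u ! i = 0" "u ! (length u - 1) = 1"
proof -
  have "lyndon (drop i u)" using assms(2) by (simp add: lyndon_cuts_def)
  then have "hd (drop i u) = 0" "last (drop i u) = 1"
    using binword_lyndon_hd_last[OF binword_drop[OF assms(1)]] assms(3) by auto
  then show "u ! i = 0" "u ! (length u - 1) = 1"
    using assms(3) by (auto simp: hd_drop_conv_nth last_conv_nth)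
qed

lemma lyndon_cuts_disjoint_Suc_image:
  assumes "binword u"
  shows "lyndon_cuts u \<inter> Suc ` lyndon_cuts u = {}"
proof (rule ccontr)
  assume "\<not> ?thesis"
  then obtain i where i: "i \<in> lyndon_cuts u" "Suc i \<in> lyndon_cuts u" by auto
  then have "1 \<le> i" "Suc i < length u" using lyndon_cuts_subset by fastforce+
  then show False
    using lyndon_cut_letters_before(2)[OF assms i(2)] lyndon_cut_letters_after(1)[OF assms i(1)]
    by simp
qed

lemma double_card_lyndon_cuts_le: "binword u \<Longrightarrow> 2 * card (lyndon_cuts u) \<le> length u"
  by (rule double_card_le_if_disjoint_Suc_image[OF lyndon_cuts_subset
        lyndon_cuts_disjoint_Suc_image])

(* The bound 2 < length u matters: every two-letter word has the single cut 1. *)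
lemma nth_if_double_card_lyndon_cuts_eq:
  assumes "binword u" "2 * card (lyndon_cuts u) = length u" "2 < length u" "p < length u"
  shows "u ! p = (if p = 0 \<or> odd p \<and> p < length u - 1 then 0 else 1)"
proof -
  have cuts: "lyndon_cuts u = {i. odd i \<and> i < length u}"
    by (rule eq_odd_below_if_double_card_eq[OF lyndon_cuts_subset
          lyndon_cuts_disjoint_Suc_image[OF assms(1)] assms(2)])
  have "even (length u)" using assms(2) by (metis dvd_triv_left)
  consider "p = 0" | "p = length u - 1" | "odd p" "p < length u - 1"
    | "even p" "0 < p" "p < length u - 1"
    using assms(4) by fastforce
  then show ?thesis
  proof cases
    case 1
    have "length u - 1 \<in> lyndon_cuts u"
      unfolding cuts using \<open>even (length u)\<close> assms(3)
      by (cases u) (auto simp: even_diff_nat)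
    from lyndon_cut_letters_before(1)[OF assms(1) this] show ?thesis
      using 1 assms(3) by simp
  next
    case 2
    have "1 \<in> lyndon_cuts u" unfolding cuts using assms(3) by simp
    from lyndon_cut_letters_after(2)[OF assms(1) this] show ?thesis
      using 2 assms(3) by simp
  next
    case 3
    have "p \<in> lyndon_cuts u" unfolding cuts using 3 by simp
    moreover have "p + 2 \<le> length u" using 3 \<open>even (length u)\<close> by presburger
    ultimately have "u ! p = 0" by (rule lyndon_cut_letters_after(1)[OF assms(1)])
    then show ?thesis using 3 by simp
  next
    case 4
    have "Suc p \<in> lyndon_cuts u" unfolding cuts using 4 by simp
    moreover have "2 \<le> Suc p" using 4 by simp
    ultimately have "u ! p = 1" using lyndon_cut_letters_before(2)[OF assms(1)] by fastforce
    then show ?thesis using 4 by simp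
  qed
qed

lemma eq_if_double_card_lyndon_cuts_eq:
  assumes "binword u" "binword v" "length u = length v" "2 < length u"
    and "2 * card (lyndon_cuts u) = length u" "2 * card (lyndon_cuts v) = length v"
  shows "u = v"
proof (rule nth_equalityI)
  fix p assume "p < length u"
  then show "u ! p = v ! p"
    using nth_if_double_card_lyndon_cuts_eq[OF assms(1,5,4)]
      nth_if_double_card_lyndon_cuts_eq[OF assms(2,6)] assms(3,4) by simp
qed (rule assms(3))

lemma lex_less_rotate_if_nth:
  assumes "i + j < length t" "\<forall>q<j. t ! q = t ! (i + q)" "t ! j < t ! (i + j)"
  shows "lex_less t (rotate i t)"
proof -
  have rot: "rotate i t ! q = t ! (i + q)" if "i + q < length t" for q
    using that by (simp add: nth_rotate)
  have "take j t = take j (rotate i t)"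
    using assms(1,2) rot by (intro nth_equalityI) auto
  then show ?thesis
    unfolding lex_less_def lexord_take_index_conv
    using assms(1,3) rot by (intro disjI2 exI[of _ j]) auto
qed

lemma Cons_concat_replicate_swap:
  "a # concat (replicate k [b, a]) @ ys = concat (replicate k [a, b]) @ a # ys"
  by (induction k) auto

lemma concat_replicate_Suc_snoc: "concat (replicate (Suc k) xs) = concat (replicate k xs) @ xs"
  by (induction k) auto

lemma length_concat_replicate: "length (concat (replicate k xs)) = k * length xs"
  by (simp add: length_concat sum_list_replicate)

lemma nth_concat_replicate_pair:
  "q < 2 * k \<Longrightarrow> concat (replicate k [a, b]) ! q = (if even q then a else b)"
proof (induction k arbitrary: q)
  case (Suc k)
  then show ?case by (auto simp: nth_Cons')
qed simp

lemma lyndon_zero_Cons_alternating: "lyndon (0 # concat (replicate k [0, 1]))"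
  (is "lyndon ?t")
proof -
  have "lex_less ?t (rotate i ?t)" if "0 < i" "i < 2 * k + 1" for i
  proof (cases "even i")
    case True
    then show ?thesis using that by (intro lex_less_rotate_if_nth[where j = 0])
        (auto simp: length_concat_replicate nth_concat_replicate_pair)
  next
    case False
    then have "i + 1 \<le> 2 * k" using that by presburger
    then show ?thesis using that False by (intro lex_less_rotate_if_nth[where j = 1])
        (auto simp: length_concat_replicate nth_concat_replicate_pair)
  qed
  then show ?thesis by (simp add: lyndon_def length_concat_replicate)
qed

lemma lyndon_alternating_snoc_one: "lyndon (concat (replicate k [0, 1]) @ [1])"
  (is "lyndon ?t")
proof -
  have "lex_less ?t (rotate i ?t)" if "0 < i" "i < 2 * k + 1" for i
  proof (cases "even i")
    case False
    then show ?thesis using that by (intro lex_less_rotate_if_nth[where j = 0])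
        (auto simp: nth_append length_concat_replicate nth_concat_replicate_pair)
  next
    case True
    then show ?thesis using that by (intro lex_less_rotate_if_nth[where j = "2 * k - i"])
        (auto simp: nth_append length_concat_replicate nth_concat_replicate_pair)
  qed
  then show ?thesis by (simp add: lyndon_def length_concat_replicate)
qed

lemma odd_in_lyndon_cuts_alternating:
  assumes "k \<le> m"
  shows "Suc (2 * k) \<in> lyndon_cuts (0 # concat (replicate m [0, 1]) @ [1])"
proof -
  have "concat (replicate m [0, 1 :: nat]) =
      concat (replicate k [0, 1]) @ concat (replicate (m - k) [0, 1])"
    using assms by (metis concat_append le_add_diff_inverse replicate_add)
  then show ?thesis
    using lyndon_zero_Cons_alternating[of k] lyndon_alternating_snoc_one[of "m - k"]
    by (simp add: lyndon_cuts_def length_concat_replicate)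
qed

lemma binword_alternating: "binword (0 # concat (replicate m [0, 1]) @ [1])"
  by (auto simp: binword_def)

lemma card_lyndon_cuts_alternating:
  "card (lyndon_cuts (0 # concat (replicate m [0, 1]) @ [1])) = Suc m"
  (is "card (lyndon_cuts ?w) = _")
proof -
  have "(\<lambda>k. Suc (2 * k)) ` {..m} \<subseteq> lyndon_cuts ?w"
    by (intro image_subsetI odd_in_lyndon_cuts_alternating) simp
  moreover have "card ((\<lambda>k. Suc (2 * k)) ` {..m}) = Suc m"
    by (simp add: card_image inj_on_def)
  ultimately have "Suc m \<le> card (lyndon_cuts ?w)"
    by (metis card_mono finite_subset lyndon_cuts_subset finite_atLeastLessThan)
  moreover have "card (lyndon_cuts ?w) \<le> Suc m"
    using double_card_lyndon_cuts_le[OF binword_alternating, of m]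
    by (simp add: length_concat_replicate)
  ultimately show ?thesis by simp
qed

lemma word_00_10_11_eq_alternating:
  "[0, 0] @ concat (replicate k [1, 0]) @ [1, 1] =
    0 # concat (replicate (Suc k) [0, 1 :: nat]) @ [1]"
  using concat_replicate_Suc_snoc[of k "[0, 1 :: nat]"] by (simp add: Cons_concat_replicate_swap)

theorem mainTheorem3:
  fixes n :: nat
  assumes "n \<ge> 3"
  defines "w \<equiv> [0, 0] @ concat (replicate (n - 2) [1, 0]) @ [1, 1]"
  shows "binword w \<and> num_lyndon_facts w = n \<and> length w = 2 * n \<and>
         (\<forall>u. binword u \<and> num_lyndon_facts u \<ge> n \<and> u \<noteq> w \<longrightarrow> length u > length w)"
proof -
  have "Suc (n - 2) = n - 1" "Suc (n - 1) = n" using assms by simp_all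
  then have w: "w = 0 # concat (replicate (n - 1) [0, 1]) @ [1]"
    unfolding w_def word_00_10_11_eq_alternating by simp
  have bin: "binword w" unfolding w by (rule binword_alternating)
  have len: "length w = 2 * n" using assms by (simp add: w length_concat_replicate)
  have card: "card (lyndon_cuts w) = n"
    unfolding w card_lyndon_cuts_alternating using \<open>Suc (n - 1) = n\<close> .
  have "length w < length u" if u: "binword u" "n \<le> num_lyndon_facts u" "u \<noteq> w" for u
  proof -
    have "length w \<le> 2 * card (lyndon_cuts u)" "2 * card (lyndon_cuts u) \<le> length u"
      using u(2) len double_card_lyndon_cuts_le[OF u(1)]
      by (simp_all add: num_lyndon_facts_eq_card_cuts)
    moreover have "u = w" if "length u = length w"
      using that calculation eq_if_double_card_lyndon_cuts_eq[OF u(1) bin] card len assms by simp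
    ultimately show ?thesis using u(3) by fastforce
  qed
  then show ?thesis using bin len card by (simp add: num_lyndon_facts_eq_card_cuts)
qed

end
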